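(* Let $\mathcal A=(Q,\Sigma,\delta,\rho)$ be a connected bireversible Mealy automaton whose labeled orbit tree $\mathfrak t(\mathcal A)$ has no active self-liftable branch, and let $\mathfrak j$ be a jungle tree with trunk of length $n$. Then for every $i\in\{1,\dots,n\}$, every $\sim$-class $\gamma$ of stems and every $\mathbf u\in Q^{i-1}$ which is a prefix of some stem in $\gamma$, the set $\{q\in Q : \mathbf uq \text{ is a prefix of some stem in } \gamma\}$ has at least $2$ elements; that is, $\mathcal S_{\mathrm{eq}}(i)\ge 2$.
   Context: Mealy automata. A Mealy automaton is $\mathcal A=(Q,\Sigma,\delta,\rho)$ with $Q,\Sigma$ finite non-empty sets, $\delta=(\delta_i\colon Q\to Q)_{i\in\Sigma}$, $\rho=(\rho_x\colon\Sigma\to\Sigma)_{x\in Q}$; transitions $x\xrightarrow{i\mid\rho_x(i)}\delta_i(x)$. Invertible: each $\rho_x$ a permutation of $\Sigma$; reversible: each $\delta_i$ a permutation of $Q$; bireversible: invertible, reversible, and for each $j\in\Sigma$ the map $x\mapsto\delta_{\rho_x^{-1}(j)}(x)$ is a permutation of $Q$. Connected: the directed graph on $Q$ with edges $x\to\delta_i(x)$ is connected. Extensions: $\rho_x(i\mathbf s)=\rho_x(i)\rho_{\delta_i(x)}(\mathbf s)$; $\rho_{x_1\cdots x_m}=\rho_{x_m}\circ\cdots\circ\rho_{x_1}$; $\delta_i(x\mathbf u)=\delta_i(x)\delta_{\rho_x(i)}(\mathbf u)$ on $Q^*$, $\delta_{i_1\cdots i_m}=\delta_{i_m}\circ\cdots\circ\delta_{i_1}$.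 The connected components of $\mathcal A^n$ (stateset $Q^n$, transitions $\mathbf u\xrightarrow{i\mid\rho_{\mathbf u}(i)}\delta_i(\mathbf u)$) are, for reversible $\mathcal A$, the orbits of $Q^n$ under the maps $\delta_{\mathbf s}$. Orbit tree $\mathfrak t(\mathcal A)$: vertices at level $n\ge0$ are the connected components of $\mathcal A^n$; an edge from the component of $\mathbf u\in Q^n$ to that of $\mathbf ux$ for all $\mathbf u,x$; edge $C\to D$ labeled $\#D/\#C$. $\top,\bot$ = first/last vertex of a downward path; level of an edge/path = level of its top vertex. A word of $Q^*\cup Q^\omega$ represents the initial path through the components of its prefixes. Edge $e$ is liftable to $f$ if every word of $\bot(e)$ has a suffix in $\bot(f)$; paths are liftable if corresponding edges are. $f$ is a legitimate child of $e$ if $\top(f)=\bot(e)$ and $f$ is liftable to $e$. A path/subtree $\mathfrak s$ is $k$-self-liftable if for all $i\ge0$ every path in $\mathfrak s$ starting at level $i+k$ is liftable to a path in $\mathfrak s$ starting at level $i$; self-liftable if $k$-self-liftable for some $k>0$. A branch (infinite initial path) is active if its labels are not eventually all $1$. Jungle trees: for a finite 1-self-liftable initial path $\mathbf e$ of length $n$ whose last edge has at least two legitimate children, all labeled $1$, $\mathfrak j(\mathbf e)$ consists of $\mathbf e$ plus all edges descending from $\bot(\mathbf e)$ that are liftable to the last edge of $\mathbf e$. Stems: the words of $\bot(\mathbf e)\subseteq Q^n$. A $\mathfrak j$-word is a word representing an initial path of $\mathfrak j$. For stems $\mathbf u,\mathbf v$: $\mathbf u\sim\mathbf v$ iff there is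 $\mathbf s\in Q^*$ such that $\mathbf{usv}$ is a $\mathfrak j$-word and $\rho_{\mathbf{us}}$ is the identity of $\Sigma^*$; $\sim$ is an equivalence relation. $\mathcal S_{\mathrm{eq}}(i)$ denotes the cardinality of $\{q\in Q:\mathbf uq$ is a prefix of a stem in $\gamma\}$ for $\mathbf u\in Q^{i-1}$ a prefix of a stem in a $\sim$-class $\gamma$; this number does not depend on the choice of $\mathbf u$ and $\gamma$. *)

theory Defs
  imports Complex_Main "HOL-Library.Sublist"
begin

text \<open>Mealy automaton with state set Q = UNIV :: 'q (finite type) and alphabet
  Sigma = UNIV :: 'a (finite type). delta i x is the target state, rho x i the output.\<close>

definition invertible :: "('a \<Rightarrow> 'q \<Rightarrow> 'q) \<Rightarrow> ('q \<Rightarrow> 'a \<Rightarrow> 'a) \<Rightarrow> bool" where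
  "invertible delta rho \<longleftrightarrow> (\<forall>x. bij (rho x))"

definition reversible :: "('a \<Rightarrow> 'q \<Rightarrow> 'q) \<Rightarrow> ('q \<Rightarrow> 'a \<Rightarrow> 'a) \<Rightarrow> bool" where
  "reversible delta rho \<longleftrightarrow> (\<forall>i. bij (delta i))"

definition bireversible :: "('a \<Rightarrow> 'q \<Rightarrow> 'q) \<Rightarrow> ('q \<Rightarrow> 'a \<Rightarrow> 'a) \<Rightarrow> bool" where
  "bireversible delta rho \<longleftrightarrow> invertible delta rho \<and> reversible delta rho \<and>
     (\<forall>j. bij (\<lambda>x. delta (inv (rho x) j) x))"

definition connected_aut :: "('a \<Rightarrow> 'q \<Rightarrow> 'q) \<Rightarrow> bool" where
  "connected_aut delta \<longleftrightarrow>
     (let E = {(x, delta i x) | x i. True} in \<forall>x y. (x, y) \<in> (E \<union> E\<inverse>)\<^sup>*)"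

fun rho_w :: "('a \<Rightarrow> 'q \<Rightarrow> 'q) \<Rightarrow> ('q \<Rightarrow> 'a \<Rightarrow> 'a) \<Rightarrow> 'q \<Rightarrow> 'a list \<Rightarrow> 'a list" where
  "rho_w delta rho x [] = []"
| "rho_w delta rho x (i # s) = rho x i # rho_w delta rho (delta i x) s"

fun rho_ww :: "('a \<Rightarrow> 'q \<Rightarrow> 'q) \<Rightarrow> ('q \<Rightarrow> 'a \<Rightarrow> 'a) \<Rightarrow> 'q list \<Rightarrow> 'a list \<Rightarrow> 'a list" where
  "rho_ww delta rho [] s = s"
| "rho_ww delta rho (x # u) s = rho_ww delta rho u (rho_w delta rho x s)"

fun delta_q :: "('a \<Rightarrow> 'q \<Rightarrow> 'q) \<Rightarrow> ('q \<Rightarrow> 'a \<Rightarrow> 'a) \<Rightarrow> 'a \<Rightarrow> 'q list \<Rightarrow> 'q list" where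
  "delta_q delta rho i [] = []"
| "delta_q delta rho i (x # u) = delta i x # delta_q delta rho (rho x i) u"

text \<open>Connected component of u in A^n (n = length u): the equivalence closure of
  the transition relation u -> delta_i(u) of A^n.\<close>
definition comp :: "('a \<Rightarrow> 'q \<Rightarrow> 'q) \<Rightarrow> ('q \<Rightarrow> 'a \<Rightarrow> 'a) \<Rightarrow> 'q list \<Rightarrow> 'q list set" where
  "comp delta rho u =
     (let E = {(w, delta_q delta rho i w) | w i. True} in {v. (u, v) \<in> (E \<union> E\<inverse>)\<^sup>*})"

definition tree_edges :: "('a \<Rightarrow> 'q \<Rightarrow> 'q) \<Rightarrow> ('q \<Rightarrow> 'a \<Rightarrow> 'a) \<Rightarrow> ('q list set \<times> 'q list set) set" where
  "tree_edges delta rho = {(comp delta rho u, comp delta rho (u @ [x])) | u x. True}"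

definition label :: "('q list set \<times> 'q list set) \<Rightarrow> rat" where
  "label e = of_nat (card (snd e)) / of_nat (card (fst e))"

definition vlev :: "'q list set \<Rightarrow> nat" where
  "vlev C = length (SOME u. u \<in> C)"

definition edge_liftable :: "('q list set \<times> 'q list set) \<Rightarrow> ('q list set \<times> 'q list set) \<Rightarrow> bool" where
  "edge_liftable e f \<longleftrightarrow> (\<forall>w\<in>snd e. \<exists>v\<in>snd f. suffix v w)"

definition is_path :: "('q list set \<times> 'q list set) set \<Rightarrow> nat \<Rightarrow> ('q list set \<times> 'q list set) list \<Rightarrow> bool" where
  "is_path S i p \<longleftrightarrow> p \<noteq> [] \<and> set p \<subseteq> S \<and> vlev (fst (hd p)) = i \<and>
     (\<forall>j. Suc j < length p \<longrightarrow> snd (p ! j) = fst (p ! Suc j))"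

definition path_liftable :: "('q list set \<times> 'q list set) list \<Rightarrow> ('q list set \<times> 'q list set) list \<Rightarrow> bool" where
  "path_liftable p q \<longleftrightarrow> length p = length q \<and> (\<forall>j<length p. edge_liftable (p ! j) (q ! j))"

definition self_liftable_k :: "('q list set \<times> 'q list set) set \<Rightarrow> nat \<Rightarrow> bool" where
  "self_liftable_k S k \<longleftrightarrow> (\<forall>i p. is_path S (i + k) p \<longrightarrow> (\<exists>q. is_path S i q \<and> path_liftable p q))"

definition self_liftable :: "('q list set \<times> 'q list set) set \<Rightarrow> bool" where
  "self_liftable S \<longleftrightarrow> (\<exists>k>0. self_liftable_k S k)"

definition is_branch :: "('a \<Rightarrow> 'q \<Rightarrow> 'q) \<Rightarrow> ('q \<Rightarrow> 'a \<Rightarrow> 'a) \<Rightarrow> (nat \<Rightarrow> 'q list set) \<Rightarrow> bool" where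
  "is_branch delta rho b \<longleftrightarrow> b 0 = comp delta rho [] \<and>
     (\<forall>j. (b j, b (Suc j)) \<in> tree_edges delta rho)"

definition branch_edges :: "(nat \<Rightarrow> 'q list set) \<Rightarrow> ('q list set \<times> 'q list set) set" where
  "branch_edges b = {(b j, b (Suc j)) | j. True}"

definition active_branch :: "(nat \<Rightarrow> 'q list set) \<Rightarrow> bool" where
  "active_branch b \<longleftrightarrow> \<not> (\<exists>N. \<forall>j\<ge>N. label (b j, b (Suc j)) = 1)"

definition is_initial_path :: "('a \<Rightarrow> 'q \<Rightarrow> 'q) \<Rightarrow> ('q \<Rightarrow> 'a \<Rightarrow> 'a) \<Rightarrow> ('q list set \<times> 'q list set) list \<Rightarrow> bool" where
  "is_initial_path delta rho es \<longleftrightarrow> es \<noteq> [] \<and> set es \<subseteq> tree_edges delta rho \<and>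
     fst (hd es) = comp delta rho [] \<and>
     (\<forall>j. Suc j < length es \<longrightarrow> snd (es ! j) = fst (es ! Suc j))"

definition legit_children :: "('a \<Rightarrow> 'q \<Rightarrow> 'q) \<Rightarrow> ('q \<Rightarrow> 'a \<Rightarrow> 'a) \<Rightarrow> ('q list set \<times> 'q list set) \<Rightarrow> ('q list set \<times> 'q list set) set" where
  "legit_children delta rho e = {f \<in> tree_edges delta rho. fst f = snd e \<and> edge_liftable f e}"

definition jungle_trunk :: "('a \<Rightarrow> 'q \<Rightarrow> 'q) \<Rightarrow> ('q \<Rightarrow> 'a \<Rightarrow> 'a) \<Rightarrow> ('q list set \<times> 'q list set) list \<Rightarrow> bool" where
  "jungle_trunk delta rho es \<longleftrightarrow> is_initial_path delta rho es \<and> self_liftable_k (set es) 1 \<and>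
     card (legit_children delta rho (last es)) \<ge> 2 \<and>
     (\<forall>f\<in>legit_children delta rho (last es). label f = 1)"

definition jungle :: "('a \<Rightarrow> 'q \<Rightarrow> 'q) \<Rightarrow> ('q \<Rightarrow> 'a \<Rightarrow> 'a) \<Rightarrow> ('q list set \<times> 'q list set) list \<Rightarrow> ('q list set \<times> 'q list set) set" where
  "jungle delta rho es = set es \<union>
     {f \<in> tree_edges delta rho. (snd (last es), fst f) \<in> (tree_edges delta rho)\<^sup>* \<and> edge_liftable f (last es)}"

definition stems :: "('q list set \<times> 'q list set) list \<Rightarrow> 'q list set" where
  "stems es = snd (last es)"

definition j_word :: "('a \<Rightarrow> 'q \<Rightarrow> 'q) \<Rightarrow> ('q \<Rightarrow> 'a \<Rightarrow> 'a) \<Rightarrow> ('q list set \<times> 'q list set) set \<Rightarrow> 'q list \<Rightarrow> bool" where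
  "j_word delta rho J w \<longleftrightarrow>
     (\<forall>k<length w. (comp delta rho (take k w), comp delta rho (take (Suc k) w)) \<in> J)"

definition stem_sim :: "('a \<Rightarrow> 'q \<Rightarrow> 'q) \<Rightarrow> ('q \<Rightarrow> 'a \<Rightarrow> 'a) \<Rightarrow> ('q list set \<times> 'q list set) list \<Rightarrow> 'q list \<Rightarrow> 'q list \<Rightarrow> bool" where
  "stem_sim delta rho es u v \<longleftrightarrow>
     (\<exists>s. j_word delta rho (jungle delta rho es) (u @ s @ v) \<and> (\<forall>t. rho_ww delta rho (u @ s) t = t))"

definition sim_classes :: "('a \<Rightarrow> 'q \<Rightarrow> 'q) \<Rightarrow> ('q \<Rightarrow> 'a \<Rightarrow> 'a) \<Rightarrow> ('q list set \<times> 'q list set) list \<Rightarrow> 'q list set set" where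
  "sim_classes delta rho es = {{v \<in> stems es. stem_sim delta rho es u v} | u. u \<in> stems es}"

end

theory Submission
  imports Defs
begin

text \<open>Let u0 \<sim> v be witnessed by a word s, so u0 s v is a word of the jungle tree and
  u0 s acts trivially. Any word of the jungle tree below the stems can be extended inside the
  jungle tree along each legitimate child of the last trunk edge, and distinct children force
  distinct next letters. So after reading u0 s and the first i - 1 letters of v we may choose a
  letter different from the i-th letter of v and then continue arbitrarily in the jungle tree;
  the stem read at the end is again equivalent to u0 via the same s.\<close>

definition orbit_step :: "('a \<Rightarrow> 'q \<Rightarrow> 'q) \<Rightarrow> ('q \<Rightarrow> 'a \<Rightarrow> 'a) \<Rightarrow> ('q list \<times> 'q list) set" where
  "orbit_step delta rho = {(w, delta_q delta rho i w) | w i. True}"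

lemma comp_eq_orbit_step:
  "comp delta rho u = {v. (u, v) \<in> (orbit_step delta rho \<union> (orbit_step delta rho)\<inverse>)\<^sup>*}"
  by (simp add: comp_def orbit_step_def Let_def)

text \<open>The letter that leaves the word u of states when i enters it, i.e. rho_u(i).\<close>
fun rho_letter :: "('a \<Rightarrow> 'q \<Rightarrow> 'q) \<Rightarrow> ('q \<Rightarrow> 'a \<Rightarrow> 'a) \<Rightarrow> 'a \<Rightarrow> 'q list \<Rightarrow> 'a" where
  "rho_letter delta rho i [] = i"
| "rho_letter delta rho i (x # u) = rho_letter delta rho (rho x i) u"

lemma length_delta_q [simp]: "length (delta_q delta rho i u) = length u"
  by (induction u arbitrary: i) auto

lemma delta_q_append:
  "delta_q delta rho i (u @ v) = delta_q delta rho i u @ delta_q delta rho (rho_letter delta rho i u) v"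
  by (induction u arbitrary: i) auto

lemma drop_delta_q:
  "drop k (delta_q delta rho i u) = delta_q delta rho (rho_letter delta rho i (take k u)) (drop k u)"
proof (cases "k \<le> length u")
  case True
  then show ?thesis
    using delta_q_append[of delta rho i "take k u" "drop k u"] by simp
qed simp

lemma symcl_rtrancl_map:
  assumes "\<And>y z. (y, z) \<in> R \<Longrightarrow> (f y, f z) \<in> S"
    and "(a, b) \<in> (R \<union> R\<inverse>)\<^sup>*"
  shows "(f a, f b) \<in> (S \<union> S\<inverse>)\<^sup>*"
  using assms(2)
proof (induction rule: rtrancl_induct)
  case (step y z)
  then show ?case using assms(1) by (blast intro: rtrancl_into_rtrancl)
qed simp

lemma mem_comp_self [simp]: "u \<in> comp delta rho u"
  by (simp add: comp_eq_orbit_step)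

lemma length_mem_comp: "v \<in> comp delta rho u \<Longrightarrow> length v = length u"
proof -
  have "(length y, length z) \<in> Id" if "(y, z) \<in> orbit_step delta rho" for y z
    using that by (auto simp: orbit_step_def)
  moreover assume "v \<in> comp delta rho u"
  ultimately have "(length u, length v) \<in> (Id \<union> Id\<inverse>)\<^sup>*"
    unfolding comp_eq_orbit_step by (blast intro: symcl_rtrancl_map)
  then show ?thesis by simp
qed

lemma comp_eq_if_mem: "v \<in> comp delta rho u \<Longrightarrow> comp delta rho v = comp delta rho u"
proof -
  let ?E = "(orbit_step delta rho \<union> (orbit_step delta rho)\<inverse>)\<^sup>*"
  assume "v \<in> comp delta rho u"
  then have uv: "(u, v) \<in> ?E" by (simp add: comp_eq_orbit_step)
  have "sym ?E" by (intro sym_rtrancl sym_Un_converse)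
  then have "(v, u) \<in> ?E" using uv by (meson symD)
  then show ?thesis using uv by (auto simp: comp_eq_orbit_step intro: rtrancl_trans)
qed

lemma drop_mem_comp: "v \<in> comp delta rho u \<Longrightarrow> drop k v \<in> comp delta rho (drop k u)"
proof -
  have "(drop k y, drop k z) \<in> orbit_step delta rho" if "(y, z) \<in> orbit_step delta rho" for y z
    using that unfolding orbit_step_def by (auto simp: drop_delta_q)
  moreover assume "v \<in> comp delta rho u"
  ultimately show ?thesis
    unfolding comp_eq_orbit_step by (blast intro: symcl_rtrancl_map)
qed

lemma snoc_mem_comp:
  assumes rev: "reversible delta rho"
    and "v \<in> comp delta rho u"
  shows "\<exists>c. v @ [c] \<in> comp delta rho (u @ [x])"
proof -
  let ?R = "orbit_step delta rho"
  have "(u, v) \<in> (?R \<union> ?R\<inverse>)\<^sup>*" using assms(2) by (simp add: comp_eq_orbit_step)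
  then show ?thesis
  proof (induction rule: rtrancl_induct)
    case (step y z)
    then obtain c where c: "(u @ [x], y @ [c]) \<in> (?R \<union> ?R\<inverse>)\<^sup>*"
      by (auto simp: comp_eq_orbit_step)
    from step.hyps(2) obtain i where "z = delta_q delta rho i y \<or> y = delta_q delta rho i z"
      by (auto simp: orbit_step_def)
    then obtain c' where "(y @ [c], z @ [c']) \<in> ?R \<union> ?R\<inverse>"
    proof
      assume "z = delta_q delta rho i y"
      then have "(y @ [c], z @ [delta (rho_letter delta rho i y) c]) \<in> ?R"
        unfolding orbit_step_def by (auto simp: delta_q_append)
      then show ?thesis using that by blast
    next
      assume y: "y = delta_q delta rho i z"
      let ?j = "rho_letter delta rho i z"
      \<comment> \<open>a backward step is matched by the preimage of c under delta ?j, which exists by reversibility\<close>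
      have "delta ?j (inv (delta ?j) c) = c"
        using rev by (simp add: reversible_def bij_is_surj surj_f_inv_f)
      then have "(z @ [inv (delta ?j) c], y @ [c]) \<in> ?R"
        unfolding orbit_step_def y by (auto simp: delta_q_append intro!: exI[of _ i])
      then show ?thesis using that by blast
    qed
    then show ?case using c by (auto simp: comp_eq_orbit_step intro: rtrancl_into_rtrancl)
  qed (auto simp: comp_eq_orbit_step)
qed

lemma tree_edge_length:
  assumes "e \<in> tree_edges delta rho" "v \<in> snd e"
  obtains u where "u \<in> fst e" "length v = Suc (length u)"
proof -
  obtain w x where "e = (comp delta rho w, comp delta rho (w @ [x]))"
    using assms(1) by (auto simp: tree_edges_def)
  with assms(2) show ?thesis
    by (intro that[of w]) (auto dest: length_mem_comp)
qed

lemma initial_path_source_length: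
  assumes "is_initial_path delta rho es" "j < length es" "w \<in> fst (es ! j)"
  shows "length w = j"
  using assms(2,3)
proof (induction j arbitrary: w)
  case 0
  then have "w \<in> comp delta rho []"
    using assms(1) by (simp add: is_initial_path_def hd_conv_nth)
  then show ?case using length_mem_comp by fastforce
next
  case (Suc j)
  have "es ! j \<in> tree_edges delta rho" "w \<in> snd (es ! j)"
    using assms(1) Suc.prems unfolding is_initial_path_def by auto
  then show ?case using Suc.IH Suc.prems(1) by (metis Suc_lessD tree_edge_length)
qed

lemma length_lt_if_trunk_edge:
  assumes "is_initial_path delta rho es" "e \<in> set es" "w \<in> fst e"
  shows "length w < length es"
  using assms initial_path_source_length by (metis in_set_conv_nth)

lemma stem_length:
  assumes "is_initial_path delta rho es" "w \<in> stems es"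
  shows "length w = length es"
proof -
  have ne: "es \<noteq> []" using assms(1) by (simp add: is_initial_path_def)
  have "last es \<in> tree_edges delta rho" "w \<in> snd (last es)"
    using assms ne by (auto simp: is_initial_path_def stems_def)
  then obtain u where "u \<in> fst (es ! (length es - 1))" "length w = Suc (length u)"
    using ne by (metis last_conv_nth tree_edge_length)
  moreover have "length u = length es - 1"
    using initial_path_source_length[OF assms(1)] ne calculation(1) by simp
  ultimately show ?thesis using ne by simp
qed

lemma comp_stem:
  assumes "is_initial_path delta rho es" "w \<in> stems es"
  shows "comp delta rho w = stems es"
proof -
  have "last es \<in> tree_edges delta rho"
    using assms(1) by (auto simp: is_initial_path_def)
  then obtain u x where "stems es = comp delta rho (u @ [x])"
    by (auto simp: tree_edges_def stems_def)
  then show ?thesis using assms(2) comp_eq_if_mem by metis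
qed

lemma j_word_snoc:
  "j_word delta rho J (Y @ [c]) \<longleftrightarrow>
     j_word delta rho J Y \<and> (comp delta rho Y, comp delta rho (Y @ [c])) \<in> J"
  unfolding j_word_def by (auto simp: less_Suc_eq)

lemma j_word_take: "j_word delta rho J Z \<Longrightarrow> j_word delta rho J (take k Z)"
  unfolding j_word_def by (auto simp: min_def)

text \<open>The words Y whose component is a vertex of the jungle tree at or below the stems.\<close>
definition jungle_descendant ::
  "('a \<Rightarrow> 'q \<Rightarrow> 'q) \<Rightarrow> ('q \<Rightarrow> 'a \<Rightarrow> 'a) \<Rightarrow> ('q list set \<times> 'q list set) list \<Rightarrow> 'q list \<Rightarrow> bool" where
  "jungle_descendant delta rho es Y \<longleftrightarrow>
     (stems es, comp delta rho Y) \<in> (tree_edges delta rho)\<^sup>* \<and>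
     (\<forall>W\<in>comp delta rho Y. \<exists>v\<in>stems es. suffix v W)"

lemma jungle_descendant_stem_suffix:
  assumes "is_initial_path delta rho es" "jungle_descendant delta rho es Y"
  shows "drop (length Y - length es) Y \<in> stems es"
proof -
  obtain v where v: "v \<in> stems es" "suffix v Y"
    using assms(2) mem_comp_self unfolding jungle_descendant_def by blast
  have "length v = length es" using stem_length[OF assms(1) v(1)] .
  with v show ?thesis by (auto simp: suffix_def)
qed

lemma jungle_descendant_if_j_word:
  assumes ip: "is_initial_path delta rho es"
    and jw: "j_word delta rho (jungle delta rho es) Z"
    and stem: "take (length es) Z \<in> stems es"
    and len: "length es \<le> length Z"
  shows "jungle_descendant delta rho es Z"
proof (cases "length Z = length es")
  case True
  then have "comp delta rho Z = stems es" using comp_stem[OF ip] stem by simp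
  then show ?thesis unfolding jungle_descendant_def by auto
next
  case False
  define k where "k = length Z - 1"
  let ?e = "(comp delta rho (take k Z), comp delta rho Z)"
  have k: "k < length Z" "length es \<le> k" "take (Suc k) Z = Z"
    using False len by (auto simp: k_def)
  then have "?e \<in> jungle delta rho es" using jw unfolding j_word_def by metis
  moreover have "?e \<notin> set es"
    using length_lt_if_trunk_edge[OF ip, of ?e "take k Z"] k by auto
  ultimately have "?e \<in> tree_edges delta rho" "(stems es, fst ?e) \<in> (tree_edges delta rho)\<^sup>*"
    "edge_liftable ?e (last es)"
    unfolding jungle_def stems_def by auto
  then show ?thesis
    unfolding jungle_descendant_def edge_liftable_def stems_def
    by (auto intro: rtrancl_into_rtrancl)
qed

text \<open>The stem at the end of Y extends into snd f, and the edge-liftability of f propagates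
  from this stem suffix to the whole component of the extension of Y.\<close>
lemma jungle_descendant_snoc:
  assumes rev: "reversible delta rho"
    and ip: "is_initial_path delta rho es"
    and Y: "jungle_descendant delta rho es Y"
    and f: "f \<in> legit_children delta rho (last es)"
  shows "\<exists>c. comp delta rho (drop (length Y - length es) Y @ [c]) = snd f \<and>
           (comp delta rho Y, comp delta rho (Y @ [c])) \<in> jungle delta rho es \<and>
           jungle_descendant delta rho es (Y @ [c])"
proof -
  define k where "k = length Y - length es"
  let ?w = "drop k Y"
  have w: "?w \<in> stems es" using jungle_descendant_stem_suffix[OF ip Y] by (simp add: k_def)
  have ft: "f \<in> tree_edges delta rho" "fst f = stems es" "edge_liftable f (last es)"
    using f by (auto simp: legit_children_def stems_def)
  then obtain u x where fe: "f = (comp delta rho u, comp delta rho (u @ [x]))"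
    by (auto simp: tree_edges_def)
  then have "?w \<in> comp delta rho u" using ft(2) w by simp
  then obtain c where "?w @ [c] \<in> comp delta rho (u @ [x])" using snoc_mem_comp[OF rev] by blast
  then have wc: "comp delta rho (?w @ [c]) = snd f" using fe comp_eq_if_mem by fastforce
  have te: "(comp delta rho Y, comp delta rho (Y @ [c])) \<in> tree_edges delta rho"
    unfolding tree_edges_def by blast
  have words: "\<exists>v\<in>stems es. suffix v W" if "W \<in> comp delta rho (Y @ [c])" for W
  proof -
    have "drop k W \<in> comp delta rho (?w @ [c])"
      using drop_mem_comp[OF that, of k] by (simp add: k_def)
    then obtain v where "v \<in> stems es" "suffix v (drop k W)"
      using wc ft(3) unfolding edge_liftable_def stems_def by auto
    then show ?thesis by (meson suffix_drop suffix_order.trans)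
  qed
  have "jungle_descendant delta rho es (Y @ [c])"
    using Y te words unfolding jungle_descendant_def by (auto intro: rtrancl_into_rtrancl)
  moreover have "(comp delta rho Y, comp delta rho (Y @ [c])) \<in> jungle delta rho es"
    using Y te words unfolding jungle_def jungle_descendant_def edge_liftable_def stems_def by auto
  ultimately show ?thesis using wc k_def by blast
qed

lemma jungle_descendant_two_snocs:
  assumes "reversible delta rho" "is_initial_path delta rho es"
    and "jungle_descendant delta rho es Y"
    and "card (legit_children delta rho (last es)) \<ge> 2"
  obtains c1 c2 where "c1 \<noteq> c2"
    "(comp delta rho Y, comp delta rho (Y @ [c1])) \<in> jungle delta rho es"
    "jungle_descendant delta rho es (Y @ [c1])"
    "(comp delta rho Y, comp delta rho (Y @ [c2])) \<in> jungle delta rho es"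
    "jungle_descendant delta rho es (Y @ [c2])"
proof -
  let ?L = "legit_children delta rho (last es)"
  have "finite ?L" using assms(4) by (intro card_ge_0_finite) linarith
  then obtain f1 f2 where f: "f1 \<in> ?L" "f2 \<in> ?L" "f1 \<noteq> f2"
    using assms(4) card_le_Suc0_iff_eq[of ?L] by auto
  obtain c1 c2 where
    c1: "comp delta rho (drop (length Y - length es) Y @ [c1]) = snd f1"
      "(comp delta rho Y, comp delta rho (Y @ [c1])) \<in> jungle delta rho es"
      "jungle_descendant delta rho es (Y @ [c1])" and
    c2: "comp delta rho (drop (length Y - length es) Y @ [c2]) = snd f2"
      "(comp delta rho Y, comp delta rho (Y @ [c2])) \<in> jungle delta rho es"
      "jungle_descendant delta rho es (Y @ [c2])"
    using jungle_descendant_snoc[OF assms(1-3)] f(1,2) by metis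
  have "fst f1 = fst f2" using f(1,2) by (simp add: legit_children_def)
  then have "c1 \<noteq> c2" using c1(1) c2(1) f(3) by (metis prod_eqI)
  then show ?thesis using that c1 c2 by blast
qed

lemma jungle_descendant_extend:
  assumes rev: "reversible delta rho"
    and ip: "is_initial_path delta rho es"
    and ne: "legit_children delta rho (last es) \<noteq> {}"
  shows "j_word delta rho (jungle delta rho es) Y \<Longrightarrow> jungle_descendant delta rho es Y \<Longrightarrow>
    \<exists>R. length R = r \<and> j_word delta rho (jungle delta rho es) (Y @ R) \<and>
      jungle_descendant delta rho es (Y @ R)"
proof (induction r arbitrary: Y)
  case 0
  then show ?case by simp
next
  case (Suc r)
  obtain f where "f \<in> legit_children delta rho (last es)" using ne by blast
  then obtain c where "j_word delta rho (jungle delta rho es) (Y @ [c])"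
    "jungle_descendant delta rho es (Y @ [c])"
    using jungle_descendant_snoc[OF rev ip Suc.prems(2)] Suc.prems(1) j_word_snoc by metis
  then obtain R where "length R = r" "j_word delta rho (jungle delta rho es) (Y @ c # R)"
    "jungle_descendant delta rho es (Y @ c # R)"
    using Suc.IH by fastforce
  then show ?case by (intro exI[of _ "c # R"]) simp
qed

lemma stem_sim_branching:
  assumes rev: "reversible delta rho"
    and trunk: "jungle_trunk delta rho es"
    and u0: "u0 \<in> stems es"
    and v: "v \<in> stems es" "stem_sim delta rho es u0 v"
    and i: "i < length es"
  obtains v' where "v' \<in> stems es" "stem_sim delta rho es u0 v'"
    "take i v' = take i v" "v' ! i \<noteq> v ! i"
proof -
  let ?n = "length es" and ?J = "jungle delta rho es"
  have ip: "is_initial_path delta rho es"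
    and two: "card (legit_children delta rho (last es)) \<ge> 2"
    using trunk by (auto simp: jungle_trunk_def)
  obtain s where jw: "j_word delta rho ?J (u0 @ s @ v)"
    and idr: "\<forall>t. rho_ww delta rho (u0 @ s) t = t"
    using v(2) unfolding stem_sim_def by blast
  have lu0: "length u0 = ?n" and lv: "length v = ?n"
    using stem_length[OF ip] u0 v(1) by auto
  define Y where "Y = u0 @ s @ take i v"
  have "Y = take (length Y) (u0 @ s @ v)" using i lv by (simp add: Y_def)
  then have jwY: "j_word delta rho ?J Y" using j_word_take[OF jw] by metis
  moreover have "jungle_descendant delta rho es Y"
    using jungle_descendant_if_j_word[OF ip jwY] u0 lu0 by (simp add: Y_def)
  ultimately obtain c where c: "c \<noteq> v ! i" "j_word delta rho ?J (Y @ [c])"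
    "jungle_descendant delta rho es (Y @ [c])"
    using jungle_descendant_two_snocs[OF rev ip _ two] j_word_snoc by metis
  have "legit_children delta rho (last es) \<noteq> {}" using two by (metis card.empty not_numeral_le_zero)
  then obtain R where R: "length R = ?n - Suc i"
    "j_word delta rho ?J (Y @ [c] @ R)" "jungle_descendant delta rho es (Y @ [c] @ R)"
    using jungle_descendant_extend[OF rev ip _ c(2,3), of "?n - Suc i"] by auto
  define v' where "v' = take i v @ c # R"
  have Z: "Y @ [c] @ R = u0 @ s @ v'" by (simp add: Y_def v'_def)
  have lv': "length v' = ?n" using R(1) i lv by (simp add: v'_def)
  have "drop (length (Y @ [c] @ R) - ?n) (Y @ [c] @ R) \<in> stems es"
    using jungle_descendant_stem_suffix[OF ip R(3)] .
  then have "v' \<in> stems es" unfolding Z using lv' by simp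
  moreover have "stem_sim delta rho es u0 v'"
    unfolding stem_sim_def using R(2) idr by (auto simp only: Z)
  moreover have "take i v' = take i v" "v' ! i = c"
    using i lv by (simp_all add: v'_def nth_append)
  ultimately show ?thesis using c(1) by (intro that[of v']) simp_all
qed

theorem corollary5p16:
  fixes delta :: "'a::finite \<Rightarrow> 'q::finite \<Rightarrow> 'q"
    and rho :: "'q \<Rightarrow> 'a \<Rightarrow> 'a"
    and es :: "('q list set \<times> 'q list set) list"
  assumes "bireversible delta rho"
    and "connected_aut delta"
    and "\<not> (\<exists>b. is_branch delta rho b \<and> active_branch b \<and> self_liftable (branch_edges b))"
    and "jungle_trunk delta rho es"
  shows "\<forall>i \<in> {1..length es}. \<forall>\<gamma> \<in> sim_classes delta rho es. \<forall>u.
           length u = i - 1 \<and> (\<exists>v\<in>\<gamma>. prefix u v) \<longrightarrow>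
           card {q. \<exists>v\<in>\<gamma>. prefix (u @ [q]) v} \<ge> 2"
proof (intro ballI allI impI)
  fix i \<gamma> u
  assume i: "i \<in> {1..length es}" and \<gamma>: "\<gamma> \<in> sim_classes delta rho es"
    and u: "length u = i - 1 \<and> (\<exists>v\<in>\<gamma>. prefix u v)"
  let ?A = "{q. \<exists>v\<in>\<gamma>. prefix (u @ [q]) v}"
  obtain u0 where u0: "u0 \<in> stems es" and \<gamma>_eq: "\<gamma> = {v \<in> stems es. stem_sim delta rho es u0 v}"
    using \<gamma> by (auto simp: sim_classes_def)
  obtain v where v: "v \<in> \<gamma>" "u = take (i - 1) v"
    using u by (auto simp: prefix_def)
  have rev: "reversible delta rho" using assms(1) by (simp add: bireversible_def)
  obtain v' where v': "v' \<in> \<gamma>" "take (i - 1) v' = take (i - 1) v" "v' ! (i - 1) \<noteq> v ! (i - 1)"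
  proof (rule stem_sim_branching[OF rev assms(4) u0, of v "i - 1"])
    show "v \<in> stems es" "stem_sim delta rho es u0 v" "i - 1 < length es"
      using v(1) i \<gamma>_eq by auto
  qed (use \<gamma>_eq in auto)
  have "w ! (i - 1) \<in> ?A" if "w \<in> \<gamma>" "take (i - 1) w = take (i - 1) v" for w
  proof -
    have "i - 1 < length w"
      using that(1) i stem_length[of delta rho es w] assms(4) \<gamma>_eq by (auto simp: jungle_trunk_def)
    then have "prefix (take (i - 1) w @ [w ! (i - 1)]) w"
      by (metis take_Suc_conv_app_nth take_is_prefix)
    then show ?thesis using that v(2) by auto
  qed
  then have "{v ! (i - 1), v' ! (i - 1)} \<subseteq> ?A" using v v' by blast
  then have "card {v ! (i - 1), v' ! (i - 1)} \<le> card ?A" by (rule card_mono[OF finite])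
  then show "card ?A \<ge> 2" using v'(3) by simp
qed

end
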